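(* Every Lucasian GNS is $\mathbf P$-Green: for every prime $p$, every power $m$ of $p$, and all $a,b\mid m$, one has $s(m)\equiv\frac m\ell\frac{s(a)s(b)}{s(g)}\bmod s(a)s(b)$, where $g=\gcd(a,b)$, $\ell=\operatorname{lcm}(a,b)$.
   Context: A GNS over a ring $D$ is $s\colon\mathbf N\to D$ with $s(0)=0$, $s(n)$ a non-zero-divisor for $n>0$, and $s(n-k)\mid s(n)-s(k)$ for $n>k>0$. It is Lucasian if $s(a+b)\equiv s(a)+s(b)\bmod s(a)s(b)$ for all $a,b$. $\mathbf P$-Green means $\mathcal F$-Green for $\mathcal F=\bigcup_p p^{\mathbf N}$ (prime powers), where $\mathcal F$-Green means the displayed congruence holds for all $m\in\mathcal F$ and $a,b\mid m$. *)

theory Defs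
  imports "HOL-Computational_Algebra.Primes"
begin

definition non_zero_divisor :: "'a::comm_ring_1 \<Rightarrow> bool" where
  "non_zero_divisor x \<longleftrightarrow> (\<forall>y. x * y = 0 \<longrightarrow> y = 0)"

definition GNS :: "(nat \<Rightarrow> 'a::comm_ring_1) \<Rightarrow> bool" where
  "GNS s \<longleftrightarrow> s 0 = 0 \<and> (\<forall>n>0. non_zero_divisor (s n))
      \<and> (\<forall>n k. 0 < k \<and> k < n \<longrightarrow> s (n - k) dvd s n - s k)"

definition Lucasian :: "(nat \<Rightarrow> 'a::comm_ring_1) \<Rightarrow> bool" where
  "Lucasian s \<longleftrightarrow> (\<forall>a b. s a * s b dvd s (a + b) - (s a + s b))"

text \<open>Exact quotient x / y (meaningful when y is a non-zero-divisor dividing x).\<close>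
definition ring_quot :: "'a::comm_ring_1 \<Rightarrow> 'a \<Rightarrow> 'a" where
  "ring_quot x y = (THE q. x = q * y)"

end

theory Submission
  imports Defs
begin

text \<open>
  Divisors of a prime power are totally ordered by divisibility, so by symmetry we may assume
  \<open>a dvd b\<close>; then \<open>gcd a b = a\<close>, \<open>lcm a b = b\<close> and, writing \<open>m = n * b\<close>, the claim becomes
  \<open>s a * s b dvd s (n * b) - n * s b\<close>. A Lucasian sequence is a divisibility sequence, so
  \<open>s a dvd s b\<close>, and it suffices to show \<open>s b\<^sup>2 dvd s (n * b) - n * s b\<close>. This follows by induction
  on \<open>n\<close> from \<open>s ((n + 1) * b) \<equiv> s (n * b) + s b\<close> modulo \<open>s (n * b) * s b\<close>, a multiple of \<open>s b\<^sup>2\<close>.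
\<close>

lemma Lucasian_dvd_mult:
  fixes s :: "nat \<Rightarrow> 'a::comm_ring_1"
  assumes "Lucasian s" and "s 0 = 0"
  shows "s b dvd s (n * b)"
proof (induction n)
  case 0
  then show ?case using \<open>s 0 = 0\<close> by simp
next
  case (Suc n)
  have "s (n * b) * s b dvd s (n * b + b) - (s (n * b) + s b)"
    using \<open>Lucasian s\<close> unfolding Lucasian_def by blast
  then have "s b dvd (s (n * b + b) - (s (n * b) + s b)) + s (n * b) + s b"
    using Suc.IH by (intro dvd_add) (auto intro: dvd_mult_right)
  then show ?case by (simp add: add.commute)
qed

lemma Lucasian_square_dvd_mult_diff:
  fixes s :: "nat \<Rightarrow> 'a::comm_ring_1"
  assumes "Lucasian s" and "s 0 = 0"
  shows "s b * s b dvd s (n * b) - of_nat n * s b"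
proof (induction n)
  case 0
  then show ?case using \<open>s 0 = 0\<close> by simp
next
  case (Suc n)
  have "s b * s b dvd s (n * b) * s b"
    using Lucasian_dvd_mult[OF assms] by (simp add: mult_dvd_mono)
  moreover have "s (n * b) * s b dvd s (n * b + b) - (s (n * b) + s b)"
    using \<open>Lucasian s\<close> unfolding Lucasian_def by blast
  ultimately have "s b * s b dvd s (n * b + b) - (s (n * b) + s b) + (s (n * b) - of_nat n * s b)"
    using Suc.IH by (blast intro: dvd_add dvd_trans)
  also have "\<dots> = s (Suc n * b) - of_nat (Suc n) * s b"
    by (simp add: algebra_simps)
  finally show ?case .
qed

lemma ring_quot_mult_cancel_left:
  fixes x y :: "'a::comm_ring_1"
  assumes "non_zero_divisor y"
  shows "ring_quot (y * x) y = x"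
  unfolding ring_quot_def
proof (rule the_equality)
  fix q
  assume "y * x = q * y"
  then have "y * (q - x) = 0" by (simp add: algebra_simps)
  then have "q - x = 0" using assms unfolding non_zero_divisor_def by blast
  then show "q = x" by simp
qed simp

lemma Lucasian_Green_congruence_if_dvd:
  fixes s :: "nat \<Rightarrow> 'a::comm_ring_1"
  assumes "GNS s" and "Lucasian s" and "a dvd b" and "b dvd m" and "m \<noteq> 0"
  shows "s a * s b dvd s m - of_nat (m div lcm a b) * ring_quot (s a * s b) (s (gcd a b))"
proof -
  have s0: "s 0 = 0" using \<open>GNS s\<close> unfolding GNS_def by simp
  obtain n where m: "m = n * b" using \<open>b dvd m\<close> by (metis dvd_def mult.commute)
  have "0 < a" "0 < b" using assms(3-5) by (auto intro: gr0I)
  then have "non_zero_divisor (s a)" using \<open>GNS s\<close> unfolding GNS_def by blast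
  then have quot: "ring_quot (s a * s b) (s (gcd a b)) = s b"
    using \<open>a dvd b\<close> by (simp add: gcd_nat.absorb1 ring_quot_mult_cancel_left)
  have "lcm a b = b" using \<open>a dvd b\<close> by (simp add: lcm_proj2_if_dvd_nat)
  then have index: "m div lcm a b = n" using m \<open>0 < b\<close> by simp
  have "s a dvd s b" using \<open>a dvd b\<close> Lucasian_dvd_mult[OF \<open>Lucasian s\<close> s0, of a]
    by (metis dvd_def mult.commute)
  then have "s a * s b dvd s b * s b" by (simp add: mult_dvd_mono)
  also have "\<dots> dvd s m - of_nat n * s b"
    using Lucasian_square_dvd_mult_diff[OF \<open>Lucasian s\<close> s0] m by simp
  finally show ?thesis by (simp add: quot index)
qed

lemma dvd_prime_power_linear:
  fixes p :: nat
  assumes "prime p" and "a dvd p ^ k" and "b dvd p ^ k"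
  shows "a dvd b \<or> b dvd a"
proof -
  obtain i j where "a = p ^ i" "b = p ^ j"
    using assms by (metis divides_primepow_nat)
  then show ?thesis by (cases "i \<le> j") (auto simp: le_imp_power_dvd)
qed

theorem corollary5p14:
  fixes s :: "nat \<Rightarrow> 'a::comm_ring_1"
  assumes "GNS s" and "Lucasian s"
  shows "\<forall>p k a b. prime p \<longrightarrow> a dvd p ^ k \<longrightarrow> b dvd p ^ k \<longrightarrow>
           s a * s b dvd
             s (p ^ k) - of_nat (p ^ k div lcm a b) * ring_quot (s a * s b) (s (gcd a b))"
proof (intro allI impI)
  fix p k a b :: nat
  assume p: "prime p" and a: "a dvd p ^ k" and b: "b dvd p ^ k"
  have "p ^ k \<noteq> 0" using p by (simp add: prime_gt_0_nat)
  consider "a dvd b" | "b dvd a" using dvd_prime_power_linear[OF p a b] by blast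
  then show "s a * s b dvd
      s (p ^ k) - of_nat (p ^ k div lcm a b) * ring_quot (s a * s b) (s (gcd a b))"
  proof cases
    case 1
    then show ?thesis using Lucasian_Green_congruence_if_dvd[OF assms 1 b \<open>p ^ k \<noteq> 0\<close>] by simp
  next
    case 2
    then show ?thesis using Lucasian_Green_congruence_if_dvd[OF assms 2 a \<open>p ^ k \<noteq> 0\<close>]
      by (simp add: mult.commute gcd.commute lcm.commute)
  qed
qed

end
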